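(* Let $k \geq 1$. If there is a (deterministic, or randomized with error at most $1/3$) communication protocol $Q$ for $\operatorname{SSD}_{2k,k+1}$ under the natural partition (Alice holds $x \in \{0,1\}^{2k}$, Bob holds $y \in \{0,1\}^{k+1}$), then there is a communication protocol of the same kind for $\operatorname{IND}_k$ under the natural partition (Alice holds $x \in \{0,1\}^k$, Bob holds $i \in [k]$) whose cost is identical to that of $Q$.
   Context: $\operatorname{SSD}_{n,k} : \{0,1\}^n \times \{0,1\}^k \to \{0,1\}$ is $1$ iff $y$ is a subsequence of $x$ (there exist indices $i_1 < \dots < i_k$ with $x_{i_j} = y_j$). $\operatorname{IND}_k : \{0,1\}^k \times [k] \to \{0,1\}$ is the indexing function $\operatorname{IND}_k(x,i) = x_i$. The cost of a protocol is the maximum number of bits exchanged over all inputs. *)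

theory Defs
  imports "HOL-Probability.Probability" "HOL-Library.Sublist" "HOL-Library.Extended_Nat"
begin

datatype ('a, 'b) protocol =
    Leaf bool
  | AliceNode "'a \<Rightarrow> bool" "('a, 'b) protocol" "('a, 'b) protocol"
  | BobNode "'b \<Rightarrow> bool" "('a, 'b) protocol" "('a, 'b) protocol"

fun run :: "('a, 'b) protocol \<Rightarrow> 'a \<Rightarrow> 'b \<Rightarrow> bool" where
  "run (Leaf v) x y = v"
| "run (AliceNode f P0 P1) x y = (if f x then run P1 x y else run P0 x y)"
| "run (BobNode g P0 P1) x y = (if g y then run P1 x y else run P0 x y)"

fun bits :: "('a, 'b) protocol \<Rightarrow> 'a \<Rightarrow> 'b \<Rightarrow> nat" where
  "bits (Leaf v) x y = 0"
| "bits (AliceNode f P0 P1) x y = Suc (if f x then bits P1 x y else bits P0 x y)"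
| "bits (BobNode g P0 P1) x y = Suc (if g y then bits P1 x y else bits P0 x y)"

definition det_cost :: "('a, 'b) protocol \<Rightarrow> 'a set \<Rightarrow> 'b set \<Rightarrow> enat" where
  "det_cost P X Y = (SUP xy \<in> X \<times> Y. enat (bits P (fst xy) (snd xy)))"

definition det_computes ::
  "('a, 'b) protocol \<Rightarrow> ('a \<Rightarrow> 'b \<Rightarrow> bool) \<Rightarrow> 'a set \<Rightarrow> 'b set \<Rightarrow> bool" where
  "det_computes P F X Y \<longleftrightarrow> (\<forall>x\<in>X. \<forall>y\<in>Y. run P x y = F x y)"

text \<open>Randomized (public-coin) protocols: a probability distribution over
  deterministic protocol trees.\<close>

definition rand_computes ::
  "('a, 'b) protocol pmf \<Rightarrow> ('a \<Rightarrow> 'b \<Rightarrow> bool) \<Rightarrow> 'a set \<Rightarrow> 'b set \<Rightarrow> bool" where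
  "rand_computes Q F X Y \<longleftrightarrow>
     (\<forall>x\<in>X. \<forall>y\<in>Y. measure_pmf.prob Q {P. run P x y \<noteq> F x y} \<le> 1/3)"

definition rand_cost :: "('a, 'b) protocol pmf \<Rightarrow> 'a set \<Rightarrow> 'b set \<Rightarrow> enat" where
  "rand_cost Q X Y = (SUP P \<in> set_pmf Q. det_cost P X Y)"

definition bitstrings :: "nat \<Rightarrow> bool list set" where
  "bitstrings n = {x. length x = n}"

definition SSD :: "bool list \<Rightarrow> bool list \<Rightarrow> bool" where
  "SSD x y \<longleftrightarrow> subseq y x"

text \<open>IND_k(x,i) = x_i, positions 1-indexed.\<close>
definition IND :: "bool list \<Rightarrow> nat \<Rightarrow> bool" where
  "IND x i = x ! (i - 1)"

end

theory Submission
  imports Defs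
begin

text \<open>Alice encodes each bit \<open>b\<close> of \<open>x \<in> {0,1}\<^sup>k\<close> as the block \<open>(\<not>b) b\<close>, Bob encodes
  \<open>i \<in> [k]\<close> as \<open>0^i 1^(k+1-i)\<close>. The encoded \<open>x\<close> has one \<open>0\<close> and one \<open>1\<close> per block, so
  matching the \<open>i\<close> zeros as early as possible puts the last of them into block \<open>i\<close>: in
  its first position if \<open>x\<^sub>i = 1\<close>, leaving \<open>k + 1 - i\<close> ones to the right, and in its
  second position if \<open>x\<^sub>i = 0\<close>, leaving only \<open>k - i\<close>. Hence SSD of the encodings is
  \<open>x\<^sub>i\<close>. Running \<open>Q\<close> on the encodings computes IND, and prefixing dummy bits
  restores the exact cost of \<open>Q\<close>; applying the same transformation to every protocol in
  the support handles randomized protocols.\<close>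

lemma enat_add_SUP:
  assumes "A \<noteq> {}"
  shows "enat n + (SUP a\<in>A. f a) = (SUP a\<in>A. enat n + f a)"
proof -
  have shift: "(\<lambda>a. enat n + f a) ` A = (+) (enat n) ` f ` A"
    by (simp add: image_image)
  have "inj ((+) (enat n))"
    by (auto intro: injI)
  then have "finite ((+) (enat n) ` f ` A) \<longleftrightarrow> finite (f ` A)"
    by (simp add: finite_image_iff inj_on_def)
  moreover have "finite (f ` A) \<Longrightarrow> enat n + Max (f ` A) = Max ((+) (enat n) ` f ` A)"
    using assms by (intro mono_Max_commute) (auto simp: mono_def add_left_mono)
  ultimately show ?thesis
    using assms unfolding shift by (simp add: Sup_enat_def)
qed

fun comap_protocol :: "('c \<Rightarrow> 'a) \<Rightarrow> ('d \<Rightarrow> 'b) \<Rightarrow> ('a, 'b) protocol \<Rightarrow> ('c, 'd) protocol" where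
  "comap_protocol fa fb (Leaf v) = Leaf v"
| "comap_protocol fa fb (AliceNode f P0 P1) =
     AliceNode (f \<circ> fa) (comap_protocol fa fb P0) (comap_protocol fa fb P1)"
| "comap_protocol fa fb (BobNode g P0 P1) =
     BobNode (g \<circ> fb) (comap_protocol fa fb P0) (comap_protocol fa fb P1)"

lemma run_comap_protocol [simp]: "run (comap_protocol fa fb P) x y = run P (fa x) (fb y)"
  by (induction P) simp_all

lemma bits_comap_protocol [simp]: "bits (comap_protocol fa fb P) x y = bits P (fa x) (fb y)"
  by (induction P) simp_all

fun pad_protocol :: "nat \<Rightarrow> ('a, 'b) protocol \<Rightarrow> ('a, 'b) protocol" where
  "pad_protocol 0 P = P"
| "pad_protocol (Suc n) P = AliceNode (\<lambda>_. True) (pad_protocol n P) (pad_protocol n P)"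

lemma run_pad_protocol [simp]: "run (pad_protocol n P) x y = run P x y"
  by (induction n) simp_all

lemma bits_pad_protocol [simp]: "bits (pad_protocol n P) x y = n + bits P x y"
  by (induction n) simp_all

lemma det_cost_comap_protocol_le:
  assumes "fa ` X' \<subseteq> X" "fb ` Y' \<subseteq> Y"
  shows "det_cost (comap_protocol fa fb P) X' Y' \<le> det_cost P X Y"
  unfolding det_cost_def
proof (rule SUP_least)
  fix xy assume "xy \<in> X' \<times> Y'"
  then have "(fa (fst xy), fb (snd xy)) \<in> X \<times> Y"
    using assms by auto
  then show "enat (bits (comap_protocol fa fb P) (fst xy) (snd xy))
      \<le> (SUP xy\<in>X \<times> Y. enat (bits P (fst xy) (snd xy)))"
    by (auto intro: SUP_upper2)
qed

lemma det_cost_pad_protocol: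
  assumes "X \<noteq> {}" "Y \<noteq> {}"
  shows "det_cost (pad_protocol n P) X Y = enat n + det_cost P X Y"
  using assms by (simp add: det_cost_def enat_add_SUP)

lemma det_cost_finite:
  assumes "finite X" "finite Y"
  shows "det_cost P X Y \<noteq> \<infinity>"
proof -
  have "det_cost P X Y \<le> enat (Max ((\<lambda>xy. bits P (fst xy) (snd xy)) ` (X \<times> Y)))"
    unfolding det_cost_def using assms by (intro SUP_least) auto
  then show ?thesis
    by (cases "det_cost P X Y") auto
qed

lemma cost_preserving_simulation:
  assumes "fa ` X' \<subseteq> X" "fb ` Y' \<subseteq> Y" "finite X" "finite Y" "X' \<noteq> {}" "Y' \<noteq> {}"
  obtains T :: "('a, 'b) protocol \<Rightarrow> ('c, 'd) protocol"
  where "\<And>Q x y. run (T Q) x y = run Q (fa x) (fb y)"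
    and "\<And>Q. det_cost (T Q) X' Y' = det_cost Q X Y"
proof
  define T where "T Q = pad_protocol
      (the_enat (det_cost Q X Y) - the_enat (det_cost (comap_protocol fa fb Q) X' Y'))
      (comap_protocol fa fb Q)" for Q :: "('a, 'b) protocol"
  show "run (T Q) x y = run Q (fa x) (fb y)" for Q x y
    by (simp add: T_def)
  show "det_cost (T Q) X' Y' = det_cost Q X Y" for Q
  proof -
    obtain c where c: "det_cost Q X Y = enat c"
      using det_cost_finite[OF assms(3,4)] by auto
    have le: "det_cost (comap_protocol fa fb Q) X' Y' \<le> enat c"
      using det_cost_comap_protocol_le[OF assms(1,2), of Q] c by simp
    then obtain d where d: "det_cost (comap_protocol fa fb Q) X' Y' = enat d"
      by (cases "det_cost (comap_protocol fa fb Q) X' Y'") auto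
    with le have "d \<le> c"
      by simp
    then show ?thesis
      using assms(5,6) by (simp add: T_def det_cost_pad_protocol c d)
  qed
qed

context
  fixes fa :: "'c \<Rightarrow> 'a" and fb :: "'d \<Rightarrow> 'b"
    and F :: "'a \<Rightarrow> 'b \<Rightarrow> bool" and G :: "'c \<Rightarrow> 'd \<Rightarrow> bool"
    and X :: "'a set" and Y :: "'b set" and X' :: "'c set" and Y' :: "'d set"
  assumes maps_into: "fa ` X' \<subseteq> X" "fb ` Y' \<subseteq> Y"
    and reduces: "\<And>x y. x \<in> X' \<Longrightarrow> y \<in> Y' \<Longrightarrow> G x y = F (fa x) (fb y)"
    and finite_domains: "finite X" "finite Y"
    and nonempty: "X' \<noteq> {}" "Y' \<noteq> {}"
begin

lemma det_computes_reduction: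
  assumes "det_computes Q F X Y"
  shows "\<exists>P. det_computes P G X' Y' \<and> det_cost P X' Y' = det_cost Q X Y"
proof -
  obtain T :: "('a, 'b) protocol \<Rightarrow> ('c, 'd) protocol"
    where run_T: "\<And>Q x y. run (T Q) x y = run Q (fa x) (fb y)"
      and cost_T: "\<And>Q. det_cost (T Q) X' Y' = det_cost Q X Y"
    using cost_preserving_simulation[OF maps_into finite_domains nonempty] by blast
  have "det_computes (T Q) G X' Y'"
    using assms maps_into reduces unfolding det_computes_def run_T by blast
  with cost_T show ?thesis
    by blast
qed

lemma rand_computes_reduction:
  assumes "rand_computes Q F X Y"
  shows "\<exists>P. rand_computes P G X' Y' \<and> rand_cost P X' Y' = rand_cost Q X Y"
proof -
  obtain T :: "('a, 'b) protocol \<Rightarrow> ('c, 'd) protocol"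
    where run_T: "\<And>Q x y. run (T Q) x y = run Q (fa x) (fb y)"
      and cost_T: "\<And>Q. det_cost (T Q) X' Y' = det_cost Q X Y"
    using cost_preserving_simulation[OF maps_into finite_domains nonempty] by blast
  have "rand_computes (map_pmf T Q) G X' Y'"
    unfolding rand_computes_def
  proof (intro ballI)
    fix x y assume "x \<in> X'" "y \<in> Y'"
    then have "T -` {P. run P x y \<noteq> G x y} = {P. run P (fa x) (fb y) \<noteq> F (fa x) (fb y)}"
      and "fa x \<in> X" "fb y \<in> Y"
      using maps_into reduces by (auto simp: run_T)
    then show "measure_pmf.prob (map_pmf T Q) {P. run P x y \<noteq> G x y} \<le> 1/3"
      using assms unfolding rand_computes_def by simp
  qed
  moreover have "rand_cost (map_pmf T Q) X' Y' = rand_cost Q X Y"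
    unfolding rand_cost_def set_map_pmf image_image cost_T ..
  ultimately show ?thesis
    by blast
qed

end

definition encode_bit :: "bool \<Rightarrow> bool list" where
  "encode_bit b = [\<not> b, b]"

definition encode_bits :: "bool list \<Rightarrow> bool list" where
  "encode_bits x = concat (map encode_bit x)"

lemma encode_bits_Nil [simp]: "encode_bits [] = []"
  and encode_bits_Cons [simp]: "encode_bits (b # x) = (\<not> b) # b # encode_bits x"
  by (simp_all add: encode_bits_def encode_bit_def)

lemma length_encode_bits [simp]: "length (encode_bits x) = 2 * length x"
  by (induction x) simp_all

lemma count_list_encode_bits_True [simp]: "count_list (encode_bits x) True = length x"
  by (induction x) simp_all

lemma subseq_replicate_True_iff: "subseq (replicate m True) ys \<longleftrightarrow> m \<le> count_list ys True"
proof (induction ys arbitrary: m)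
  case Nil
  then show ?case
    by (cases m) simp_all
next
  case (Cons y ys)
  show ?case
  proof (cases m)
    case 0
    then show ?thesis
      by simp
  next
    case (Suc n)
    then show ?thesis
      using Cons.IH[of m] Cons.IH[of n] by (cases y) simp_all
  qed
qed

lemma subseq_Falses_Trues_encode_bits_iff:
  "j < length x \<Longrightarrow>
   subseq (replicate (Suc j) False @ replicate (length x - j) True) (encode_bits x) \<longleftrightarrow> x ! j"
proof (induction x arbitrary: j)
  case Nil
  then show ?case
    by simp
next
  case (Cons b x)
  show ?case
  proof (cases j)
    case 0
    have "subseq (replicate (length x) True) (encode_bits x)"
      by (simp add: subseq_replicate_True_iff)
    moreover have "\<not> subseq (True # replicate (length x) True) (encode_bits x)"
      using subseq_replicate_True_iff[of "Suc (length x)"] by simp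
    ultimately show ?thesis
      using 0 by (cases b) simp_all
  next
    case (Suc j')
    then show ?thesis
      using Cons.IH[of j'] Cons.prems by (cases b) simp_all
  qed
qed

definition index_query :: "nat \<Rightarrow> nat \<Rightarrow> bool list" where
  "index_query k i = replicate i False @ replicate (k + 1 - i) True"

lemma SSD_encode_bits_index_query:
  assumes "i \<in> {1..length x}"
  shows "SSD (encode_bits x) (index_query (length x) i) = IND x i"
proof -
  obtain j where "i = Suc j" "j < length x"
    using assms by (cases i) auto
  then show ?thesis
    using subseq_Falses_Trues_encode_bits_iff
    by (simp add: SSD_def IND_def index_query_def)
qed

lemma finite_bitstrings: "finite (bitstrings n)"
  using finite_lists_length_eq[of "UNIV :: bool set" n] by (simp add: bitstrings_def)

lemma bitstrings_nonempty: "bitstrings n \<noteq> {}"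
  by (auto simp: bitstrings_def intro: exI[of _ "replicate n False"])

theorem mainTheorem6:
  fixes k :: nat
  assumes "k \<ge> 1"
  shows "(\<forall>Q. det_computes Q SSD (bitstrings (2*k)) (bitstrings (k+1)) \<longrightarrow>
            (\<exists>P. det_computes P IND (bitstrings k) {1..k} \<and>
                 det_cost P (bitstrings k) {1..k} =
                 det_cost Q (bitstrings (2*k)) (bitstrings (k+1))))
       \<and> (\<forall>Q. rand_computes Q SSD (bitstrings (2*k)) (bitstrings (k+1)) \<longrightarrow>
            (\<exists>P. rand_computes P IND (bitstrings k) {1..k} \<and>
                 rand_cost P (bitstrings k) {1..k} =
                 rand_cost Q (bitstrings (2*k)) (bitstrings (k+1))))"
proof -
  have maps_into: "encode_bits ` bitstrings k \<subseteq> bitstrings (2*k)"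
    "index_query k ` {1..k} \<subseteq> bitstrings (k+1)"
    by (auto simp: bitstrings_def index_query_def)
  have reduces: "IND x i = SSD (encode_bits x) (index_query k i)"
    if "x \<in> bitstrings k" "i \<in> {1..k}" for x i
    using that SSD_encode_bits_index_query[of i x] by (simp add: bitstrings_def)
  have nonempty: "bitstrings k \<noteq> {}" "{1..k} \<noteq> {}"
    using assms bitstrings_nonempty by auto
  note reduction_hyps = maps_into reduces finite_bitstrings finite_bitstrings nonempty
  show ?thesis
    using det_computes_reduction[where F = SSD and G = IND, OF reduction_hyps]
      rand_computes_reduction[where F = SSD and G = IND, OF reduction_hyps]
    by blast
qed

end
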